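(* Let $(E,j)$ be a soft inductive system of Banach spaces whose connecting maps are asymptotically isometric, i.e. $$\lim_{n\gg m}\lambda_{nm}=1,\qquad \lambda_{nm}:=\inf_{x_m\in E_m,\ \|x_m\|=1}\|j_{nm}x_m\|.$$ Then a uniformly bounded net $x_\bullet$ is $j$-convergent if and only if $\lim_n j_{\infty n}x_n$ exists in $E_\infty$; in that case $j\text{-}\lim_nx_n=\lim_n j_{\infty n}x_n$.
   Context: Let $(N,\le)$ be a directed set; $\lim_{n\gg m}a_{nm}:=\lim_m\limsup_n a_{nm}$. A soft inductive system $(E,j)$: Banach spaces $E_n$, linear contractions $j_{nm}:E_m\to E_n$ ($n\ge m$), $j_{nn}=\mathrm{id}$, $j_{nm}=0$ if $n\not\ge m$, with $\lim_{n\gg m}\|(j_{nl}-j_{nm}j_{ml})x_l\|=0$ for all $l,x_l$. Nets $x_\bullet=(x_n)$, $x_n\in E_n$; seminorm $|x_\bullet|=\limsup_n\|x_n\|$ on uniformly bounded nets. Basic nets: $j_{\bullet m}x_m=(j_{nm}x_m)_n$. $C(E,j)$ ($j$-convergent nets): seminorm closure of basic nets; $C_0(E,j)$: nets with $\|x_n\|\to0$. $E_\infty:=C(E,j)/C_0(E,j)$ with norm $\|x_\infty\|=|x_\bullet|$, $x_\infty=j\text{-}\lim_nx_n$ the class of $x_\bullet$; $j_{\infty m}x_m:=j\text{-}\lim_nj_{nm}x_m$. *)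

theory Defs
  imports "HOL-Analysis.Analysis"
begin

definition dirtop :: "('i::preorder) filter" where
  "dirtop = (INF k. principal {k..})"

text \<open>lim_{n>>m} a_{nm} = L  means  lim_m limsup_n a_{nm} = L (values in ereal).\<close>
definition limgg :: "('i::preorder \<Rightarrow> 'i \<Rightarrow> ereal) \<Rightarrow> ereal \<Rightarrow> bool" where
  "limgg a L \<longleftrightarrow> ((\<lambda>m. Limsup dirtop (\<lambda>n. a n m)) \<longlongrightarrow> L) dirtop"

text \<open>The Banach spaces E_n are realised as closed linear subspaces of one ambient
  Banach space; j n m is the connecting map E_m -> E_n (only values on E m matter).\<close>
definition soft_inductive_system ::
  "('i::preorder \<Rightarrow> 'a::banach set) \<Rightarrow> ('i \<Rightarrow> 'i \<Rightarrow> 'a \<Rightarrow> 'a) \<Rightarrow> bool" where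
  "soft_inductive_system E j \<longleftrightarrow>
     (\<forall>n. subspace (E n) \<and> closed (E n)) \<and>
     (\<forall>n m. \<forall>x\<in>E m. j n m x \<in> E n) \<and>
     (\<forall>n m. \<forall>x\<in>E m. \<forall>y\<in>E m. j n m (x + y) = j n m x + j n m y) \<and>
     (\<forall>n m c. \<forall>x\<in>E m. j n m (c *\<^sub>R x) = c *\<^sub>R j n m x) \<and>
     (\<forall>n m. \<forall>x\<in>E m. norm (j n m x) \<le> norm x) \<and>
     (\<forall>n. \<forall>x\<in>E n. j n n x = x) \<and>
     (\<forall>n m. \<not> m \<le> n \<longrightarrow> (\<forall>x\<in>E m. j n m x = 0)) \<and>
     (\<forall>l. \<forall>x\<in>E l. limgg (\<lambda>n m. ereal (norm (j n l x - j n m (j m l x)))) 0)"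

text \<open>lambda_{nm} = inf over unit vectors x_m of E_m of ||j_{nm} x_m|| (inf of empty set = +inf).\<close>
definition lam :: "('i::preorder \<Rightarrow> 'a::banach set) \<Rightarrow> ('i \<Rightarrow> 'i \<Rightarrow> 'a \<Rightarrow> 'a) \<Rightarrow> 'i \<Rightarrow> 'i \<Rightarrow> ereal" where
  "lam E j n m = Inf {ereal (norm (j n m x)) | x. x \<in> E m \<and> norm x = 1}"

definition unif_bounded_net :: "('i \<Rightarrow> 'a set) \<Rightarrow> ('i \<Rightarrow> 'a::real_normed_vector) \<Rightarrow> bool" where
  "unif_bounded_net E x \<longleftrightarrow> (\<forall>n. x n \<in> E n) \<and> (\<exists>B. \<forall>n. norm (x n) \<le> B)"

definition snorm :: "('i::preorder \<Rightarrow> 'a::real_normed_vector) \<Rightarrow> ereal" where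
  "snorm x = Limsup dirtop (\<lambda>n. ereal (norm (x n)))"

definition basic_net :: "('i \<Rightarrow> 'i \<Rightarrow> 'a \<Rightarrow> 'a) \<Rightarrow> 'i \<Rightarrow> 'a \<Rightarrow> 'i \<Rightarrow> 'a" where
  "basic_net j m y = (\<lambda>n. j n m y)"

text \<open>C(E,j): seminorm closure of the basic nets within the uniformly bounded nets.\<close>
definition jconv :: "('i::preorder \<Rightarrow> 'a::banach set) \<Rightarrow> ('i \<Rightarrow> 'i \<Rightarrow> 'a \<Rightarrow> 'a) \<Rightarrow> ('i \<Rightarrow> 'a) \<Rightarrow> bool" where
  "jconv E j x \<longleftrightarrow> unif_bounded_net E x \<and>
     (\<forall>e>0. \<exists>m. \<exists>y\<in>E m. snorm (x - basic_net j m y) < ereal e)"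

definition null_net :: "('i::preorder \<Rightarrow> 'a set) \<Rightarrow> ('i \<Rightarrow> 'a::real_normed_vector) \<Rightarrow> bool" where
  "null_net E x \<longleftrightarrow> unif_bounded_net E x \<and> ((\<lambda>n. norm (x n)) \<longlongrightarrow> 0) dirtop"

text \<open>j-lim_n x_n: the class of x in E_infinity = C(E,j)/C_0(E,j).\<close>
definition jclass :: "('i::preorder \<Rightarrow> 'a::banach set) \<Rightarrow> ('i \<Rightarrow> 'i \<Rightarrow> 'a \<Rightarrow> 'a) \<Rightarrow> ('i \<Rightarrow> 'a) \<Rightarrow> ('i \<Rightarrow> 'a) set" where
  "jclass E j x = {y. jconv E j y \<and> null_net E (x - y)}"

definition Einf :: "('i::preorder \<Rightarrow> 'a::banach set) \<Rightarrow> ('i \<Rightarrow> 'i \<Rightarrow> 'a \<Rightarrow> 'a) \<Rightarrow> ('i \<Rightarrow> 'a) set set" where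
  "Einf E j = jclass E j ` {x. jconv E j x}"

text \<open>Distance in E_infinity: ||X - Y|| = |x - y| for representatives x of X, y of Y.\<close>
definition dist_inf :: "('i::preorder \<Rightarrow> 'a::real_normed_vector) set \<Rightarrow> ('i \<Rightarrow> 'a) set \<Rightarrow> ereal" where
  "dist_inf X Y = snorm ((SOME x. x \<in> X) - (SOME y. y \<in> Y))"

definition jinf :: "('i::preorder \<Rightarrow> 'a::banach set) \<Rightarrow> ('i \<Rightarrow> 'i \<Rightarrow> 'a \<Rightarrow> 'a) \<Rightarrow> 'i \<Rightarrow> 'a \<Rightarrow> ('i \<Rightarrow> 'a) set" where
  "jinf E j m y = jclass E j (basic_net j m y)"

end

theory Submission
  imports Defs
begin

text \<open>If \<open>x\<close> is within \<open>\<epsilon>\<close> of a basic net \<open>j\<^sub>\<bullet>\<^sub>m y\<close>, softness of the system makes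
  \<open>j\<^sub>k\<^sub>n x\<^sub>n\<close> close to \<open>j\<^sub>k\<^sub>n j\<^sub>n\<^sub>m y \<approx> j\<^sub>k\<^sub>m y \<approx> x\<^sub>k\<close> for \<open>n \<gg> m\<close>, so \<open>j\<^sub>\<infinity>\<^sub>n x\<^sub>n\<close> tends to the class
  of \<open>x\<close>. Conversely, if \<open>j\<^sub>\<infinity>\<^sub>n x\<^sub>n\<close> tends to the class of a \<open>j\<close>-convergent net \<open>z\<close>, then,
  approximating \<open>z\<close> by a basic net in the same way, \<open>j\<^sub>l\<^sub>n (x\<^sub>n - j\<^sub>n\<^sub>m w)\<close> is small for \<open>l \<gg> n\<close>;
  since the \<open>j\<^sub>l\<^sub>n\<close> are asymptotically isometric, \<open>x\<^sub>n - j\<^sub>n\<^sub>m w\<close> itself is small, so \<open>x\<close> differs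
  from \<open>z\<close> by a null net and is \<open>j\<close>-convergent.\<close>

lemma eventually_dirtop_iff:
  assumes directed: "\<forall>a b::'i::preorder. \<exists>c. a \<le> c \<and> b \<le> c"
  shows "eventually P (dirtop::'i filter) \<longleftrightarrow> (\<exists>k. \<forall>n\<ge>k. P n)"
  unfolding dirtop_def
proof (subst eventually_INF_base)
  fix a b :: 'i
  obtain c where "a \<le> c" "b \<le> c" using directed by blast
  then show "\<exists>x\<in>UNIV. principal {x..} \<le> inf (principal {a..}) (principal {b..})"
    by (intro bexI[of _ c]) (auto intro: order_trans)
qed (auto simp: eventually_principal)

lemma dirtop_neq_bot:
  assumes directed: "\<forall>a b::'i::preorder. \<exists>c. a \<le> c \<and> b \<le> c"
  shows "(dirtop::'i filter) \<noteq> bot"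
  using eventually_dirtop_iff[OF directed, of "\<lambda>_. False"] by (auto simp: trivial_limit_def)

lemma snorm_less_imp_eventually: "snorm f < ereal e \<Longrightarrow> eventually (\<lambda>k. norm (f k) < e) dirtop"
  unfolding snorm_def by (drule Limsup_lessD) simp

lemma snorm_le_if_eventually: "eventually (\<lambda>k. norm (f k) \<le> e) dirtop \<Longrightarrow> snorm f \<le> ereal e"
  unfolding snorm_def by (rule Limsup_bounded) simp

lemma snorm_nonneg:
  assumes directed: "\<forall>a b::'i::preorder. \<exists>c. a \<le> c \<and> b \<le> c"
  shows "0 \<le> snorm (f::'i \<Rightarrow> 'a::real_normed_vector)"
  unfolding snorm_def by (rule le_Limsup[OF dirtop_neq_bot[OF directed]]) simp

lemma tendsto_ereal_zeroI:
  assumes "\<And>n. 0 \<le> g n" "\<And>e. e > 0 \<Longrightarrow> eventually (\<lambda>n. g n < ereal e) F"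
  shows "(g \<longlongrightarrow> (0::ereal)) F"
proof (subst order_tendsto_iff, intro conjI allI impI)
  fix l :: ereal assume "l < 0" then show "eventually (\<lambda>n. l < g n) F"
    by (intro always_eventually allI order.strict_trans2[OF _ assms(1)])
next
  fix u :: ereal assume "0 < u"
  then obtain e where "0 < e" "ereal e < u"
    by (metis dual_order.strict_trans ereal_dense2 ereal_less(2))
  then show "eventually (\<lambda>n. g n < u) F"
    using assms(2)[of e] by (auto elim: eventually_mono)
qed

lemma tendsto_ereal_zeroD:
  "(g \<longlongrightarrow> (0::ereal)) F \<Longrightarrow> e > 0 \<Longrightarrow> eventually (\<lambda>n. g n < ereal e) F"
  by (subst (asm) order_tendsto_iff) auto

lemma eventually_norm_diff_triangle_less:
  assumes "eventually (\<lambda>k. norm (a k - b k) < e1) F" "eventually (\<lambda>k. norm (b k - c k) < e2) F"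
  shows "eventually (\<lambda>k. norm (a k - (c k::'a::real_normed_vector)) < e1 + e2) F"
  using eventually_conj[OF assms] by (rule eventually_mono) (auto intro: norm_diff_triangle_less)

context
  fixes E :: "'i::preorder \<Rightarrow> 'a::banach set" and j :: "'i \<Rightarrow> 'i \<Rightarrow> 'a \<Rightarrow> 'a"
  assumes directed: "\<forall>a b::'i. \<exists>c. a \<le> c \<and> b \<le> c"
    and soft: "soft_inductive_system E j"
begin

lemma subspace_E: "subspace (E n)"
  using soft unfolding soft_inductive_system_def by auto

lemma j_mem: "x \<in> E m \<Longrightarrow> j n m x \<in> E n"
  using soft unfolding soft_inductive_system_def by auto

lemma norm_j_le: "x \<in> E m \<Longrightarrow> norm (j n m x) \<le> norm x"
  using soft unfolding soft_inductive_system_def by auto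

lemma j_scaleR: "x \<in> E m \<Longrightarrow> j n m (c *\<^sub>R x) = c *\<^sub>R j n m x"
  using soft unfolding soft_inductive_system_def by auto

lemma j_diff:
  assumes x: "x \<in> E m" and y: "y \<in> E m"
  shows "j n m (x - y) = j n m x - j n m y"
proof -
  have "(-1) *\<^sub>R y \<in> E m" using subspace_E y by (simp add: subspace_neg)
  then have "j n m (x + (-1) *\<^sub>R y) = j n m x + j n m ((-1) *\<^sub>R y)"
    using soft x unfolding soft_inductive_system_def by blast
  then show ?thesis using j_scaleR[OF y, of n "-1"] by simp
qed

lemma norm_j_diff_le: "x \<in> E m \<Longrightarrow> y \<in> E m \<Longrightarrow> norm (j n m x - j n m y) \<le> norm (x - y)"
  using j_diff norm_j_le subspace_diff[OF subspace_E] by metis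

lemma eventually_j_compose_close:
  assumes "y \<in> E l" "e > 0"
  shows "eventually (\<lambda>m. eventually (\<lambda>n. norm (j n l y - j n m (j m l y)) < e) dirtop) dirtop"
proof -
  have "limgg (\<lambda>n m. ereal (norm (j n l y - j n m (j m l y)))) 0"
    using soft assms unfolding soft_inductive_system_def by auto
  then have "eventually (\<lambda>m. Limsup dirtop (\<lambda>n. ereal (norm (j n l y - j n m (j m l y)))) < ereal e) dirtop"
    unfolding limgg_def using tendsto_ereal_zeroD assms(2) by blast
  then show ?thesis by (rule eventually_mono) (drule Limsup_lessD, simp)
qed

lemma jconv_basic_net:
  assumes y: "y \<in> E m"
  shows "jconv E j (basic_net j m y)"
proof -
  have "snorm (basic_net j m y - basic_net j m y) \<le> ereal 0"
    by (rule snorm_le_if_eventually) simp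
  then have "snorm (basic_net j m y - basic_net j m y) < ereal e" if "e > 0" for e
    using that by (metis ereal_less(2) order.strict_trans1 zero_ereal_def)
  then show ?thesis
    using y j_mem norm_j_le unfolding jconv_def unif_bounded_net_def basic_net_def by blast
qed

lemma jconv_imp_eventually_close_basic_net:
  assumes "jconv E j x" "e > 0"
  obtains m y where "y \<in> E m" "eventually (\<lambda>k. norm (x k - j k m y) < e) dirtop"
proof -
  obtain m y where "y \<in> E m" "snorm (x - basic_net j m y) < ereal e"
    using assms unfolding jconv_def by blast
  then show ?thesis using that snorm_less_imp_eventually[of "x - basic_net j m y" e]
    by (auto simp: fun_diff_def basic_net_def)
qed

lemma jconv_if_eventually_close:
  assumes x: "unif_bounded_net E x" and z: "jconv E j z"
    and close: "\<And>e. e > 0 \<Longrightarrow> eventually (\<lambda>k. norm (x k - z k) < e) dirtop"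
  shows "jconv E j x"
  unfolding jconv_def
proof (intro conjI allI impI x)
  fix e :: real assume e: "e > 0"
  obtain m w where w: "w \<in> E m" and "eventually (\<lambda>k. norm (z k - j k m w) < e/2) dirtop"
    using jconv_imp_eventually_close_basic_net[OF z half_gt_zero[OF e]] by blast
  moreover have "eventually (\<lambda>k. norm (x k - z k) < e/4) dirtop" using close[of "e/4"] e by simp
  ultimately have "eventually (\<lambda>k. norm (x k - j k m w) < e/4 + e/2) dirtop"
    by (intro eventually_norm_diff_triangle_less)
  then have "snorm (x - basic_net j m w) \<le> ereal (3*e/4)"
    by (intro snorm_le_if_eventually) (auto elim: eventually_mono simp: fun_diff_def basic_net_def)
  also have "\<dots> < ereal e" using e by simp
  finally show "\<exists>m. \<exists>y\<in>E m. snorm (x - basic_net j m y) < ereal e" using w by blast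
qed

lemma some_jclass_eventually_close:
  assumes "jconv E j a"
  obtains r where "(SOME x. x \<in> jclass E j a) = r"
    "\<And>e. e > 0 \<Longrightarrow> eventually (\<lambda>k. norm (a k - r k) < e) dirtop"
proof -
  have "a \<in> jclass E j a"
    using assms subspace_0[OF subspace_E]
    unfolding jclass_def null_net_def unif_bounded_net_def by auto
  then have "(SOME x. x \<in> jclass E j a) \<in> jclass E j a" by (rule someI[of "\<lambda>x. x \<in> jclass E j a"])
  then show ?thesis using that unfolding jclass_def null_net_def
    by (auto simp: fun_diff_def order_tendsto_iff)
qed

lemma dist_inf_jclass_le:
  assumes a: "jconv E j a" and b: "jconv E j b" and e: "e > 0"
    and close: "eventually (\<lambda>k. norm (a k - b k) < e) dirtop"
  shows "dist_inf (jclass E j a) (jclass E j b) \<le> ereal (2 * e)"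
proof -
  obtain r where r: "(SOME x. x \<in> jclass E j a) = r"
    "\<And>e. e > 0 \<Longrightarrow> eventually (\<lambda>k. norm (a k - r k) < e) dirtop"
    using some_jclass_eventually_close[OF a] by blast
  obtain s where s: "(SOME x. x \<in> jclass E j b) = s"
    "\<And>e. e > 0 \<Longrightarrow> eventually (\<lambda>k. norm (b k - s k) < e) dirtop"
    using some_jclass_eventually_close[OF b] by blast
  have "eventually (\<lambda>k. norm (r k - a k) < e/2) dirtop"
    using r(2)[of "e/2"] e by (auto simp: norm_minus_commute)
  then have "eventually (\<lambda>k. norm (r k - s k) < e/2 + e + e/2) dirtop"
    using s(2)[of "e/2"] e
    by (intro eventually_norm_diff_triangle_less[OF eventually_norm_diff_triangle_less]) (auto simp: close)
  then have "snorm (r - s) \<le> ereal (2*e)"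
    by (intro snorm_le_if_eventually) (auto elim: eventually_mono simp: fun_diff_def)
  then show ?thesis unfolding dist_inf_def r(1) s(1) .
qed

lemma eventually_close_if_dist_inf_jclass_less:
  assumes a: "jconv E j a" and b: "jconv E j b" and e: "e > 0"
    and d: "dist_inf (jclass E j a) (jclass E j b) < ereal e"
  shows "eventually (\<lambda>k. norm (a k - b k) < 2 * e) dirtop"
proof -
  obtain r where r: "(SOME x. x \<in> jclass E j a) = r"
    "\<And>e. e > 0 \<Longrightarrow> eventually (\<lambda>k. norm (a k - r k) < e) dirtop"
    using some_jclass_eventually_close[OF a] by blast
  obtain s where s: "(SOME x. x \<in> jclass E j b) = s"
    "\<And>e. e > 0 \<Longrightarrow> eventually (\<lambda>k. norm (b k - s k) < e) dirtop"
    using some_jclass_eventually_close[OF b] by blast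
  have "eventually (\<lambda>k. norm ((r - s) k) < e) dirtop"
    using d unfolding dist_inf_def r(1) s(1) by (rule snorm_less_imp_eventually)
  moreover have "eventually (\<lambda>k. norm (s k - b k) < e/2) dirtop"
    using s(2)[of "e/2"] e by (auto simp: norm_minus_commute)
  ultimately have "eventually (\<lambda>k. norm (a k - b k) < e/2 + e + e/2) dirtop"
    using r(2)[of "e/2"] e
    by (intro eventually_norm_diff_triangle_less[OF eventually_norm_diff_triangle_less])
      (auto simp: fun_diff_def)
  then show ?thesis by simp
qed

lemma lam_le_norm_ratio:
  assumes u: "u \<in> E k" "u \<noteq> 0"
  shows "lam E j l k \<le> ereal (norm (j l k u) / norm u)"
proof -
  define v where "v = (1 / norm u) *\<^sub>R u"
  have "v \<in> E k" "norm v = 1"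
    using u subspace_E unfolding v_def by (auto simp: subspace_scale)
  then have "lam E j l k \<le> ereal (norm (j l k v))"
    unfolding lam_def by (intro Inf_lower) blast
  also have "norm (j l k v) = norm (j l k u) / norm u"
    unfolding v_def using j_scaleR[OF u(1)] by simp
  finally show ?thesis .
qed

text \<open>The constant 2 is arbitrary: asymptotic isometry gives \<open>\<lambda>\<^sub>l\<^sub>k > 1/2\<close> frequently in \<open>l\<close>.\<close>

lemma eventually_norm_le_if_eventually_norm_j_less:
  assumes asym: "limgg (lam E j) 1"
  shows "eventually (\<lambda>k. \<forall>u\<in>E k. \<forall>c. eventually (\<lambda>l. norm (j l k u) < c) dirtop \<longrightarrow> norm u \<le> 2*c) dirtop"
proof -
  have "eventually (\<lambda>k. ereal (1/2) < Limsup dirtop (\<lambda>l. lam E j l k)) dirtop"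
    using asym unfolding limgg_def by (subst (asm) order_tendsto_iff) auto
  then show ?thesis
  proof (rule eventually_mono, intro ballI allI impI)
    fix k u c
    assume half: "ereal (1/2) < Limsup dirtop (\<lambda>l. lam E j l k)" and u: "u \<in> E k"
      and ev: "eventually (\<lambda>l. norm (j l k u) < c) dirtop"
    show "norm u \<le> 2 * c"
    proof (rule ccontr)
      assume "\<not> norm u \<le> 2 * c"
      moreover have "0 \<le> c"
        using eventually_happens[OF ev] dirtop_neq_bot[OF directed]
        by (auto intro: order.trans[OF norm_ge_zero] less_imp_le)
      ultimately have big: "2 * c < norm u" "u \<noteq> 0" by auto
      have "eventually (\<lambda>l. lam E j l k \<le> ereal (1/2)) dirtop"
        using ev
      proof (rule eventually_mono)
        fix l assume "norm (j l k u) < c"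
        then have "norm (j l k u) / norm u \<le> 1/2" using big by (simp add: divide_simps)
        then show "lam E j l k \<le> ereal (1/2)"
          using lam_le_norm_ratio[OF u big(2), of l] by (meson ereal_less_eq(3) order.trans)
      qed
      then have "Limsup dirtop (\<lambda>l. lam E j l k) \<le> ereal (1/2)" by (rule Limsup_bounded)
      with half show False by simp
    qed
  qed
qed

lemma jconv_imp_eventually_j_close:
  assumes x: "unif_bounded_net E x" and xc: "jconv E j x" and e: "e > 0"
  shows "eventually (\<lambda>n. eventually (\<lambda>k. norm (j k n (x n) - x k) < e) dirtop) dirtop"
proof -
  define d where "d = e / 3"
  have d: "d > 0" using e by (simp add: d_def)
  have xE: "\<And>n. x n \<in> E n" using x unfolding unif_bounded_net_def by blast
  obtain m y where y: "y \<in> E m" and approx: "eventually (\<lambda>k. norm (x k - j k m y) < d) dirtop"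
    using jconv_imp_eventually_close_basic_net[OF xc d] by blast
  show ?thesis
    using eventually_conj[OF approx eventually_j_compose_close[OF y d]]
  proof (rule eventually_mono, elim conjE)
    fix n assume n: "norm (x n - j n m y) < d"
      and compose: "eventually (\<lambda>k. norm (j k m y - j k n (j n m y)) < d) dirtop"
    have "eventually (\<lambda>k. norm (j k n (x n) - j k n (j n m y)) < d) dirtop"
      using norm_j_diff_le[OF xE j_mem[OF y]] n by (auto intro: always_eventually le_less_trans)
    moreover have "eventually (\<lambda>k. norm (j k n (j n m y) - j k m y) < d) dirtop"
      using compose by (auto elim: eventually_mono simp: norm_minus_commute)
    moreover have "eventually (\<lambda>k. norm (j k m y - x k) < d) dirtop"
      using approx by (auto elim: eventually_mono simp: norm_minus_commute)
    ultimately have "eventually (\<lambda>k. norm (j k n (x n) - x k) < d + d + d) dirtop"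
      by (intro eventually_norm_diff_triangle_less)
    then show "eventually (\<lambda>k. norm (j k n (x n) - x k) < e) dirtop" by (simp add: d_def)
  qed
qed

lemma tendsto_dist_inf_jinf_jclass:
  assumes x: "unif_bounded_net E x" and xc: "jconv E j x"
  shows "((\<lambda>n. dist_inf (jinf E j n (x n)) (jclass E j x)) \<longlongrightarrow> 0) dirtop"
proof (rule tendsto_ereal_zeroI)
  fix n show "0 \<le> dist_inf (jinf E j n (x n)) (jclass E j x)"
    unfolding dist_inf_def by (rule snorm_nonneg[OF directed])
next
  fix e :: real assume e: "e > 0"
  have xE: "\<And>n. x n \<in> E n" using x unfolding unif_bounded_net_def by blast
  show "eventually (\<lambda>n. dist_inf (jinf E j n (x n)) (jclass E j x) < ereal e) dirtop"
    using jconv_imp_eventually_j_close[OF x xc divide_pos_pos[OF e, of 3]]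
  proof (rule eventually_mono)
    fix n assume "eventually (\<lambda>k. norm (j k n (x n) - x k) < e/3) dirtop"
    then have "dist_inf (jclass E j (basic_net j n (x n))) (jclass E j x) \<le> ereal (2 * (e/3))"
      using e by (intro dist_inf_jclass_le jconv_basic_net xE xc) (auto simp: basic_net_def)
    also have "\<dots> < ereal e" using e by simp
    finally show "dist_inf (jinf E j n (x n)) (jclass E j x) < ereal e" by (simp add: jinf_def)
  qed simp
qed

lemma eventually_close_if_tendsto_jinf:
  assumes asym: "limgg (lam E j) 1" and x: "unif_bounded_net E x" and z: "jconv E j z"
    and lim: "((\<lambda>n. dist_inf (jinf E j n (x n)) (jclass E j z)) \<longlongrightarrow> 0) dirtop"
    and e: "e > 0"
  shows "eventually (\<lambda>k. norm (x k - z k) < e) dirtop"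
proof -
  define d where "d = e / 8"
  have d: "d > 0" using e by (simp add: d_def)
  have xE: "\<And>n. x n \<in> E n" using x unfolding unif_bounded_net_def by blast
  obtain m w where w: "w \<in> E m" and approx: "eventually (\<lambda>k. norm (z k - j k m w) < d) dirtop"
    using jconv_imp_eventually_close_basic_net[OF z d] by blast
  have jx: "eventually (\<lambda>k. eventually (\<lambda>l. norm (j l k (x k) - z l) < d) dirtop) dirtop"
    using tendsto_ereal_zeroD[OF lim half_gt_zero[OF d]]
  proof (rule eventually_mono)
    fix k assume "dist_inf (jinf E j k (x k)) (jclass E j z) < ereal (d/2)"
    then have "eventually (\<lambda>l. norm (basic_net j k (x k) l - z l) < 2 * (d/2)) dirtop"
      using d by (intro eventually_close_if_dist_inf_jclass_less jconv_basic_net xE z)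
        (auto simp: jinf_def)
    then show "eventually (\<lambda>l. norm (j l k (x k) - z l) < d) dirtop" by (simp add: basic_net_def)
  qed
  show ?thesis
    using eventually_conj[OF approx eventually_conj[OF jx eventually_conj[OF
          eventually_j_compose_close[OF w d]
          eventually_norm_le_if_eventually_norm_j_less[OF asym]]]]
  proof (rule eventually_mono, elim conjE)
    fix k
    assume zk: "norm (z k - j k m w) < d"
      and jxk: "eventually (\<lambda>l. norm (j l k (x k) - z l) < d) dirtop"
      and compose: "eventually (\<lambda>l. norm (j l m w - j l k (j k m w)) < d) dirtop"
      and iso: "\<forall>u\<in>E k. \<forall>c. eventually (\<lambda>l. norm (j l k u) < c) dirtop \<longrightarrow> norm u \<le> 2*c"
    have "eventually (\<lambda>l. norm (j l k (x k) - j l k (j k m w)) < d + d + d) dirtop"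
      using eventually_norm_diff_triangle_less[OF eventually_norm_diff_triangle_less[OF jxk approx]
          compose] .
    then have "eventually (\<lambda>l. norm (j l k (x k - j k m w)) < 3 * d) dirtop"
      using j_diff[OF xE j_mem[OF w]] by simp
    then have "norm (x k - j k m w) \<le> 2 * (3 * d)"
      using iso subspace_diff[OF subspace_E xE j_mem[OF w]] by blast
    then show "norm (x k - z k) < e"
      using zk e norm_triangle_sub[of "x k - z k" "j k m w - z k"]
      by (simp add: norm_minus_commute d_def)
  qed
qed

end

theorem mainTheorem4:
  fixes E :: "'i::preorder \<Rightarrow> 'a::banach set"
    and j :: "'i \<Rightarrow> 'i \<Rightarrow> 'a \<Rightarrow> 'a"
    and x :: "'i \<Rightarrow> 'a"
  assumes directed: "\<forall>a b::'i. \<exists>c. a \<le> c \<and> b \<le> c"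
    and soft: "soft_inductive_system E j"
    and asym_iso: "limgg (lam E j) 1"
    and ub: "unif_bounded_net E x"
  shows "(jconv E j x \<longleftrightarrow>
           (\<exists>L\<in>Einf E j. ((\<lambda>n. dist_inf (jinf E j n (x n)) L) \<longlongrightarrow> 0) dirtop))
       \<and> (jconv E j x \<longrightarrow>
           ((\<lambda>n. dist_inf (jinf E j n (x n)) (jclass E j x)) \<longlongrightarrow> 0) dirtop)"
proof (intro conjI iffI impI)
  assume xc: "jconv E j x"
  show "((\<lambda>n. dist_inf (jinf E j n (x n)) (jclass E j x)) \<longlongrightarrow> 0) dirtop"
    by (rule tendsto_dist_inf_jinf_jclass[OF directed soft ub xc])
  then show "\<exists>L\<in>Einf E j. ((\<lambda>n. dist_inf (jinf E j n (x n)) L) \<longlongrightarrow> 0) dirtop"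
    using xc unfolding Einf_def by blast
next
  assume "\<exists>L\<in>Einf E j. ((\<lambda>n. dist_inf (jinf E j n (x n)) L) \<longlongrightarrow> 0) dirtop"
  then obtain z where z: "jconv E j z"
    and lim: "((\<lambda>n. dist_inf (jinf E j n (x n)) (jclass E j z)) \<longlongrightarrow> 0) dirtop"
    unfolding Einf_def by blast
  show "jconv E j x"
    by (rule jconv_if_eventually_close[OF directed soft ub z
          eventually_close_if_tendsto_jinf[OF directed soft asym_iso ub z lim]])
qed

end
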